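(* Let $(\Phi_i)_{i\in\mathbb{Z}}$ be a family of reduced indefinite binary quadratic forms over $\mathbb{Q}((1/T))$ of the same discriminant $D$, written $\Phi_i=((-1)^iA_i,\,B_i,\,(-1)^{i+1}A_{i+1})$, such that for every $i$ the form $\Phi_{i+1}$ is obtained from $\Phi_i$ by a transformation $\begin{pmatrix}0&1\\-1&\delta_i\end{pmatrix}$ with $\delta_i\in\mathbb{Q}[T]$. Let $Q$ be a binary quadratic form properly equivalent to $\Phi_0$. Then $$m(Q)=\inf_{i\in\mathbb{Z}}\deg A_i.$$
   Context: $\mathbb{Q}((1/T))$ is the field of formal Laurent series in $1/T$ over $\mathbb{Q}$; $\deg$ of a nonzero series is the exponent of its leading term, $\deg0=-\infty$. A binary quadratic form $(A,B,C)$ is $AX^2+BXY+CY^2$ with $A,B,C\in\mathbb{Q}((1/T))$ not all in $\mathbb{Q}(T)$, discriminant $D=B^2-4AC$; indefinite means $D\ne0$ is a square in $\mathbb{Q}((1/T))$; a square root $\sqrt D$ is fixed for the discriminant $D$. If $A\ne0$, first root $f=\frac{\sqrt D-B}{2A}$, second root $s=\frac{-\sqrt D-B}{2A}$. Reduced means $A\ne0$, $f\ne0$, $\deg f<0<\deg s$. A matrix $\begin{pmatrix}\alpha&\beta\\\gamma&\delta\end{pmatrix}$ over $\mathbb{Q}[T]$ transforms $q(x,y)$ into $q(\alpha X+\beta Y,\gamma X+\delta Y)$; two forms are properly equivalent if one is transformed into the other by such a matrix of determinant $1$. $m(Q)=\inf\{\deg Q(X,Y):X,Y\in\mathbb{Q}[T],\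 (X,Y)\ne(0,0)\}$. *)

theory Defs
  imports "HOL-Computational_Algebra.Formal_Laurent_Series" "HOL-Computational_Algebra.Polynomial"
    "HOL-Library.Extended_Real"
begin

text \<open>Q((1/T)) is modelled as rat fls (formal Laurent series in X = 1/T, finitely many
  negative powers of X).  A polynomial p(T) in Q[T] is embedded as p(1/X).\<close>

definition emb :: "rat poly \<Rightarrow> rat fls" where
  "emb p = (\<Sum>k\<le>degree p. fls_const (coeff p k) * fls_X_inv ^ k)"

text \<open>Degree in T: the exponent of the leading term, i.e. minus the X-subdegree.\<close>
definition deg :: "rat fls \<Rightarrow> ereal" where
  "deg f = (if f = 0 then -\<infinity> else ereal (of_int (- fls_subdegree f)))"

definition in_QT :: "rat fls \<Rightarrow> bool" where
  "in_QT f \<longleftrightarrow> (\<exists>p q. q \<noteq> 0 \<and> f * emb q = emb p)"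

type_synonym form = "rat fls \<times> rat fls \<times> rat fls"

definition is_bqf :: "form \<Rightarrow> bool" where
  "is_bqf F = (case F of (A,B,C) \<Rightarrow> \<not> (in_QT A \<and> in_QT B \<and> in_QT C))"

definition disc :: "form \<Rightarrow> rat fls" where
  "disc F = (case F of (A,B,C) \<Rightarrow> B^2 - 4*A*C)"

definition evalf :: "form \<Rightarrow> rat fls \<Rightarrow> rat fls \<Rightarrow> rat fls" where
  "evalf F x y = (case F of (A,B,C) \<Rightarrow> A*x^2 + B*x*y + C*y^2)"

definition first_root :: "rat fls \<Rightarrow> form \<Rightarrow> rat fls" where
  "first_root sq F = (case F of (A,B,C) \<Rightarrow> (sq - B) / (2*A))"

definition second_root :: "rat fls \<Rightarrow> form \<Rightarrow> rat fls" where
  "second_root sq F = (case F of (A,B,C) \<Rightarrow> (- sq - B) / (2*A))"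

definition reduced :: "rat fls \<Rightarrow> form \<Rightarrow> bool" where
  "reduced sq F \<longleftrightarrow> fst F \<noteq> 0 \<and> first_root sq F \<noteq> 0 \<and>
     deg (first_root sq F) < 0 \<and> 0 < deg (second_root sq F)"

text \<open>Transformation of (A,B,C) by the matrix ((a,b),(c,d)) over Q[T]:
  q(x,y) becomes q(a x + b y, c x + d y).\<close>
definition transform :: "form \<Rightarrow> rat poly \<Rightarrow> rat poly \<Rightarrow> rat poly \<Rightarrow> rat poly \<Rightarrow> form" where
  "transform F a b c d = (case F of (A,B,C) \<Rightarrow>
     (A*(emb a)^2 + B*emb a*emb c + C*(emb c)^2,
      2*A*emb a*emb b + B*(emb a*emb d + emb b*emb c) + 2*C*emb c*emb d,
      A*(emb b)^2 + B*emb b*emb d + C*(emb d)^2))"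

definition properly_equiv :: "form \<Rightarrow> form \<Rightarrow> bool" where
  "properly_equiv F G \<longleftrightarrow> (\<exists>a b c d. a*d - b*c = 1 \<and> transform F a b c d = G)"

definition m_min :: "form \<Rightarrow> ereal" where
  "m_min F = (INF xy \<in> {(x,y). (x,y) \<noteq> ((0::rat poly),(0::rat poly))}.
                 deg (evalf F (emb (fst xy)) (emb (snd xy))))"

end

theory Submission
  imports Defs
begin

text \<open>
  Put a_j = (-1)^j A_j and \<Phi>_j = (a_j, b_j, a_(j+1)). Each reduced \<Phi>_j factors as
  a_j (x - f_j y) (x - s_j y) with deg f_j < 0 < deg s_j, and the step matrices move the roots
  by f_(j+1) = \<delta>_j - 1/f_j and s_(j+1) = \<delta>_j - 1/s_j. All \<Phi>_j represent the same values
  as Q, and \<Phi>_j(1, 0) = a_j, so m(Q) <= inf deg A_j. Conversely, write a value v as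
  \<Phi>_j(x, y) with max(deg x, deg y) minimal. If deg y <= deg x, then deg v >= deg a_j unless
  deg (x - s_j y) < 0; in that case deg (\<delta>_(j-1) - s_j) < 0 makes
  v = \<Phi>_(j-1)(y, \<delta>_(j-1) y - x) a smaller representation. Symmetrically, if deg x < deg y,
  then deg v >= deg a_(j+1) unless deg (y - x/f_j) < 0, and then v = \<Phi>_(j+1)(\<delta>_j x - y, x)
  is smaller.
\<close>

lemma emb_poly: "emb p = poly (map_poly fls_const p) fls_X_inv"
proof -
  have "degree (map_poly fls_const p) = degree p"
    by (rule degree_map_poly) simp
  then show ?thesis
    by (simp add: emb_def poly_altdef coeff_map_poly)
qed

lemma emb_0 [simp]: "emb 0 = 0"
  by (simp add: emb_poly)

lemma emb_pCons: "emb (pCons c p) = fls_const c + fls_X_inv * emb p"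
  by (simp add: emb_poly map_poly_pCons)

lemma emb_1 [simp]: "emb 1 = 1"
  by (simp add: one_pCons emb_pCons)

lemma emb_add [simp]: "emb (p + q) = emb p + emb q"
  by (induction p q rule: poly_induct2) (simp_all add: emb_pCons fls_plus_const algebra_simps)

lemma emb_smult: "emb (smult c p) = fls_const c * emb p"
  by (induction p) (simp_all add: emb_pCons algebra_simps)

lemma emb_mult [simp]: "emb (p * q) = emb p * emb q"
  by (induction p) (simp_all add: emb_pCons emb_smult algebra_simps)

lemma emb_uminus [simp]: "emb (- p) = - emb p"
  using emb_smult[of "-1" p] by (simp add: fls_const_uminus)

lemma emb_diff [simp]: "emb (p - q) = emb p - emb q"
  using emb_add[of p "- q"] by simp

lemma emb_nth: "fls_nth (emb p) k = (if k \<le> 0 then coeff p (nat (- k)) else 0)"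
proof (induction p arbitrary: k)
  case (pCons c p)
  have "fls_nth (emb (pCons c p)) k = (if k = 0 then c else 0) + fls_nth (emb p) (k + 1)"
    by (simp add: emb_pCons fls_X_inv_times_conv_shift)
  also have "\<dots> = (if k \<le> 0 then coeff (pCons c p) (nat (- k)) else 0)"
  proof (cases "k < 0")
    case True
    then have "nat (- k) = Suc (nat (- (k + 1)))" by simp
    with True pCons show ?thesis by (simp add: coeff_pCons)
  qed (auto simp: pCons)
  finally show ?case .
qed simp

lemma emb_eq_0_iff [simp]: "emb p = 0 \<longleftrightarrow> p = 0"
proof
  assume "emb p = 0"
  then have "lead_coeff p = 0"
    using emb_nth[of p "- int (degree p)"] by simp
  then show "p = 0"
    by simp
qed simp

lemma fls_subdegree_emb: "p \<noteq> 0 \<Longrightarrow> fls_subdegree (emb p) = - int (degree p)"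
  by (rule fls_subdegree_eqI) (auto simp: emb_nth coeff_eq_0)

lemma deg_0 [simp]: "deg 0 = -\<infinity>"
  by (simp add: deg_def)

lemma deg_eq_minf_iff [simp]: "deg f = -\<infinity> \<longleftrightarrow> f = 0"
  by (simp add: deg_def)

lemma deg_not_infinity [simp]: "deg f \<noteq> \<infinity>"
  by (simp add: deg_def)

lemma deg_mult [simp]: "deg (f * g) = deg f + deg g"
  by (cases "f = 0"; cases "g = 0") (simp_all add: deg_def)

lemma deg_uminus [simp]: "deg (- f) = deg f"
  by (simp add: deg_def)

lemma deg_inverse: "deg (inverse f) = - deg f" if "f \<noteq> 0"
  using that by (simp add: deg_def)

lemma deg_neg_one_power [simp]: "deg ((- 1) ^ n) = 0"
  by (cases "even n") (simp_all add: deg_def)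

lemma deg_emb: "deg (emb p) = (if p = 0 then -\<infinity> else ereal (degree p))"
  by (simp add: deg_def fls_subdegree_emb)

lemma deg_emb_less_iff:
  "deg (emb q) < deg (emb p) \<longleftrightarrow> p \<noteq> 0 \<and> (q = 0 \<or> degree q < degree p)"
  by (auto simp: deg_emb)

lemma deg_add_le: "deg (f + g) \<le> max (deg f) (deg g)"
proof (cases "f = 0 \<or> g = 0 \<or> f + g = 0")
  case False
  then have "min (fls_subdegree f) (fls_subdegree g) \<le> fls_subdegree (f + g)"
    by (intro fls_plus_subdegree) auto
  with False show ?thesis by (auto simp: deg_def max_def min_def split: if_splits)
qed (auto simp: max_def)

lemma deg_diff_le: "deg (f - g) \<le> max (deg f) (deg g)"
  using deg_add_le[of f "- g"] by simp

lemma deg_add_eq_left: "deg g < deg f \<Longrightarrow> deg (f + g) = deg f"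
proof (cases "g = 0")
  case False
  assume "deg g < deg f"
  with False have "f \<noteq> 0" and lt: "fls_subdegree f < fls_subdegree g"
    by (auto simp: deg_def split: if_splits)
  moreover have "f + g \<noteq> 0"
  proof
    assume "f + g = 0"
    then have "g = - f" by (simp add: add_eq_0_iff)
    with lt show False by simp
  qed
  ultimately show ?thesis by (simp add: deg_def fls_subdegree_add_eq1)
qed simp

lemma deg_diff_eq_left: "deg g < deg f \<Longrightarrow> deg (f - g) = deg f"
  using deg_add_eq_left[of "- g" f] by simp

lemma deg_mult_less: "deg f < 0 \<Longrightarrow> g \<noteq> 0 \<Longrightarrow> deg (f * g) < deg g"
  by (cases "deg f"; cases "deg g") auto

lemma deg_mult_greater: "0 < deg f \<Longrightarrow> g \<noteq> 0 \<Longrightarrow> deg g < deg (f * g)"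
  by (cases "deg f"; cases "deg g") auto

lemma deg_diff_commute: "deg (f - g) = deg (g - f)"
  by (metis deg_uminus minus_diff_eq)

lemma evalf_transform:
  "evalf (transform F a b c d) x y = evalf F (emb a * x + emb b * y) (emb c * x + emb d * y)"
  by (cases F) (simp add: evalf_def transform_def power2_eq_square algebra_simps)

lemma evalf_transform_step:
  "evalf (transform F 0 1 (- 1) d) (emb (d * x - y)) (emb x) = evalf F (emb x) (emb y)"
  by (simp add: evalf_transform)

definition form_values :: "form \<Rightarrow> rat fls set" where
  "form_values F = {evalf F (emb x) (emb y) | x y. (x, y) \<noteq> (0, 0)}"

lemma m_min_eq_Inf_form_values: "m_min F = Inf (deg ` form_values F)"
proof -
  have "form_values F = (\<lambda>xy. evalf F (emb (fst xy)) (emb (snd xy))) ` {(x, y). (x, y) \<noteq> (0, 0)}"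
    by (auto simp: form_values_def image_def)
  then show ?thesis
    by (simp add: m_min_def image_image)
qed

lemma fst_in_form_values: "fst F \<in> form_values F"
proof -
  have "fst F = evalf F (emb 1) (emb 0)"
    by (simp add: evalf_def split: prod.split)
  moreover have "(1 :: rat poly, 0 :: rat poly) \<noteq> (0, 0)"
    by simp
  ultimately show ?thesis
    unfolding form_values_def by blast
qed

lemma form_values_transform:
  assumes det: "a * d - b * c = 1"
  shows "form_values (transform F a b c d) = form_values F"
proof
  show "form_values (transform F a b c d) \<subseteq> form_values F"
  proof
    fix v assume "v \<in> form_values (transform F a b c d)"
    then obtain x y where xy: "(x, y) \<noteq> (0, 0)"
      and v: "v = evalf (transform F a b c d) (emb x) (emb y)"
      by (auto simp: form_values_def)
    have "d * (a * x + b * y) - b * (c * x + d * y) = (a * d - b * c) * x"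
      "a * (c * x + d * y) - c * (a * x + b * y) = (a * d - b * c) * y"
      by (simp_all add: algebra_simps)
    then have "(a * x + b * y, c * x + d * y) \<noteq> (0, 0)"
      using xy det by auto
    moreover have "v = evalf F (emb (a * x + b * y)) (emb (c * x + d * y))"
      by (simp add: v evalf_transform)
    ultimately show "v \<in> form_values F"
      unfolding form_values_def by blast
  qed
  show "form_values F \<subseteq> form_values (transform F a b c d)"
  proof
    fix v assume "v \<in> form_values F"
    then obtain x y where xy: "(x, y) \<noteq> (0, 0)" and v: "v = evalf F (emb x) (emb y)"
      by (auto simp: form_values_def)
    define x' y' where "x' = d * x - b * y" and "y' = a * y - c * x"
    have "a * x' + b * y' = (a * d - b * c) * x" "c * x' + d * y' = (a * d - b * c) * y"
      by (simp_all add: x'_def y'_def algebra_simps)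
    then have inv: "a * x' + b * y' = x" "c * x' + d * y' = y"
      using det by simp_all
    then have "(x', y') \<noteq> (0, 0)"
      using xy by auto
    moreover have "v = evalf (transform F a b c d) (emb x') (emb y')"
      by (simp add: v evalf_transform flip: emb_mult emb_add inv)
    ultimately show "v \<in> form_values (transform F a b c d)"
      unfolding form_values_def by blast
  qed
qed

lemma m_min_properly_equiv: "properly_equiv F G \<Longrightarrow> m_min G = m_min F"
  unfolding properly_equiv_def m_min_eq_Inf_form_values by (auto simp: form_values_transform)

lemma roots_vieta:
  assumes disc: "sq\<^sup>2 = disc (A, B, C)" and A: "A \<noteq> 0"
  shows "B = - A * (first_root sq (A, B, C) + second_root sq (A, B, C))"
    and "C = A * first_root sq (A, B, C) * second_root sq (A, B, C)"
proof -
  show "B = - A * (first_root sq (A, B, C) + second_root sq (A, B, C))"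
    using A by (simp add: first_root_def second_root_def field_simps)
  have "A * first_root sq (A, B, C) * second_root sq (A, B, C) = (B\<^sup>2 - sq\<^sup>2) / (4 * A)"
    using A by (simp add: first_root_def second_root_def field_simps power2_eq_square)
  also have "\<dots> = C"
    using A disc by (simp add: disc_def)
  finally show "C = A * first_root sq (A, B, C) * second_root sq (A, B, C)" ..
qed

lemma evalf_eq_root_factors:
  assumes "sq\<^sup>2 = disc (A, B, C)" and "A \<noteq> 0"
  shows "evalf (A, B, C) x y
    = A * (x - first_root sq (A, B, C) * y) * (x - second_root sq (A, B, C) * y)"
proof -
  define f s where "f = first_root sq (A, B, C)" and "s = second_root sq (A, B, C)"
  have B: "B = - A * (f + s)" and C: "C = A * f * s"
    using roots_vieta[OF assms] by (simp_all add: f_def s_def)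
  have "evalf (A, B, C) x y = A * (x - f * y) * (x - s * y)"
    by (simp add: evalf_def B C power2_eq_square algebra_simps)
  then show ?thesis
    by (simp add: f_def s_def)
qed

lemma roots_transform_step:
  assumes disc: "sq\<^sup>2 = disc F"
    and f: "first_root sq F \<noteq> 0" and s: "second_root sq F \<noteq> 0"
  shows "first_root sq (transform F 0 1 (- 1) d) = emb d - inverse (first_root sq F)"
    and "second_root sq (transform F 0 1 (- 1) d) = emb d - inverse (second_root sq F)"
proof -
  obtain A B C where F: "F = (A, B, C)"
    by (cases F)
  have A: "A \<noteq> 0" and minus: "sq - B \<noteq> 0" and plus: "- sq - B \<noteq> 0"
    using f s by (auto simp: F first_root_def second_root_def)
  have AC: "4 * A * C = (sq - B) * (- sq - B)"
    using disc by (simp add: F disc_def power2_eq_square algebra_simps)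
  then have C: "C \<noteq> 0"
    using minus plus by auto
  have tr: "transform (A, B, C) 0 1 (- 1) d = (C, - B - 2 * C * emb d, A + B * emb d + C * (emb d)\<^sup>2)"
    by (simp add: transform_def power2_eq_square algebra_simps)
  show "first_root sq (transform F 0 1 (- 1) d) = emb d - inverse (first_root sq F)"
    unfolding F tr using A C minus AC
    by (simp add: first_root_def field_simps)
  show "second_root sq (transform F 0 1 (- 1) d) = emb d - inverse (second_root sq F)"
    unfolding F tr using A C plus AC
    by (simp add: second_root_def field_simps)
qed

locale reduced_chain =
  fixes sq :: "rat fls" and a b :: "int \<Rightarrow> rat fls" and \<delta> :: "int \<Rightarrow> rat poly"
  assumes chain_disc: "\<And>j. sq\<^sup>2 = disc (a j, b j, a (j + 1))"
    and chain_reduced: "\<And>j. reduced sq (a j, b j, a (j + 1))"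
    and chain_step: "\<And>j. transform (a j, b j, a (j + 1)) 0 1 (- 1) (\<delta> j)
      = (a (j + 1), b (j + 1), a (j + 2))"
begin

abbreviation \<Phi> :: "int \<Rightarrow> form" where
  "\<Phi> j \<equiv> (a j, b j, a (j + 1))"

abbreviation f :: "int \<Rightarrow> rat fls" where
  "f j \<equiv> first_root sq (\<Phi> j)"

abbreviation s :: "int \<Rightarrow> rat fls" where
  "s j \<equiv> second_root sq (\<Phi> j)"

lemma coeff_nonzero: "a j \<noteq> 0"
  using chain_reduced[of j] by (simp add: reduced_def)

lemma roots_nonzero: "f j \<noteq> 0" "s j \<noteq> 0"
  and deg_first_root: "deg (f j) < 0"
  and deg_second_root: "0 < deg (s j)"
  using chain_reduced[of j] by (auto simp: reduced_def)

lemma evalf_chain: "evalf (\<Phi> j) x y = a j * (x - f j * y) * (x - s j * y)"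
  by (rule evalf_eq_root_factors[OF chain_disc coeff_nonzero])

lemma deg_coeff_succ: "deg (a (j + 1)) = deg (a j) + deg (f j) + deg (s j)"
  using arg_cong[OF roots_vieta(2)[OF chain_disc coeff_nonzero], of deg, of j] by simp

lemma transform_chain: "transform (\<Phi> j) 0 1 (- 1) (\<delta> j) = \<Phi> (j + 1)"
  using chain_step[of j] by (simp add: add.assoc)

lemma roots_succ:
  "f (j + 1) = emb (\<delta> j) - inverse (f j)" "s (j + 1) = emb (\<delta> j) - inverse (s j)"
  using roots_transform_step[OF chain_disc roots_nonzero, of j "\<delta> j"]
  by (simp_all only: transform_chain)

lemma deg_delta_minus_inverse_first_root: "deg (emb (\<delta> j) - inverse (f j)) < 0"
  using deg_first_root[of "j + 1"] unfolding roots_succ by simp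

lemma deg_delta_minus_second_root: "deg (emb (\<delta> j) - s (j + 1)) < 0"
  using deg_second_root[of j] roots_nonzero(2)[of j] unfolding roots_succ
  by (simp add: deg_inverse ereal_uminus_less_reorder)

lemma evalf_chain_succ:
  "evalf (\<Phi> (j + 1)) (emb (\<delta> j * x - y)) (emb x) = evalf (\<Phi> j) (emb x) (emb y)"
  using evalf_transform_step[of "\<Phi> j" "\<delta> j" x y] by (simp add: transform_chain)

lemma form_values_chain: "form_values (\<Phi> j) = form_values (\<Phi> 0)"
proof -
  have succ: "form_values (\<Phi> (i + 1)) = form_values (\<Phi> i)" for i
    using form_values_transform[of 0 "\<delta> i" 1 "- 1" "\<Phi> i"] by (simp add: transform_chain)
  show ?thesis
  proof (induction j rule: int_induct[where k = 0])
    case (step1 i)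
    then show ?case using succ[of i] by simp
  next
    case (step2 i)
    then show ?case using succ[of "i - 1"] by simp
  qed simp
qed

lemma descent_backward:
  assumes xy: "(x, y) \<noteq> (0, 0)" and le: "deg (emb y) \<le> deg (emb x)"
    and small: "deg (evalf (\<Phi> j) (emb x) (emb y)) < deg (a j)"
  shows "max (degree y) (degree (\<delta> (j - 1) * y - x)) < max (degree x) (degree y)"
proof -
  define X Y where "X = emb x" and "Y = emb y"
  have "x \<noteq> 0"
    using xy le by (auto simp: deg_emb)
  then have X: "X \<noteq> 0" "0 \<le> deg X"
    by (simp_all add: X_def deg_emb)
  have "deg (f j * Y) < deg X"
  proof (cases "Y = 0")
    case False
    then have "deg (f j * Y) < deg Y"
      using deg_first_root by (rule deg_mult_less[rotated])
    with le show ?thesis by (simp add: X_def Y_def)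
  qed (use X in auto)
  then have "deg (X - f j * Y) = deg X"
    by (rule deg_diff_eq_left)
  then have "deg (a j) + deg X + deg (X - s j * Y) < deg (a j)"
    using small by (simp add: evalf_chain X_def Y_def)
  then have near: "deg (X - s j * Y) < 0"
    using coeff_nonzero[of j] X(2)
    by (cases "deg (a j)"; cases "deg X"; cases "deg (X - s j * Y)") auto
  then have "deg (X - (X - s j * Y)) = deg X"
    using X(2) by (intro deg_diff_eq_left) simp
  then have sY: "deg (s j * Y) = deg X"
    by simp
  then have "y \<noteq> 0"
    using X(1) by (metis Y_def deg_eq_minf_iff emb_0 mult_zero_right)
  then have Y: "Y \<noteq> 0" "0 \<le> deg Y"
    by (simp_all add: Y_def deg_emb)
  then have "deg Y < deg X"
    using deg_mult_greater[OF deg_second_root[of j] Y(1)] sY by simp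
  then have "degree y < degree x"
    using \<open>y \<noteq> 0\<close> by (simp add: X_def Y_def deg_emb_less_iff)
  have "emb (\<delta> (j - 1) * y - x) = (emb (\<delta> (j - 1)) - s j) * Y - (X - s j * Y)"
    by (simp add: X_def Y_def algebra_simps)
  also have "deg \<dots> < deg Y"
  proof -
    have "deg ((emb (\<delta> (j - 1)) - s j) * Y) < deg Y"
      using deg_delta_minus_second_root[of "j - 1"] Y(1) by (intro deg_mult_less) simp_all
    moreover have "deg (X - s j * Y) < deg Y"
      using near Y(2) by (rule less_le_trans)
    ultimately show ?thesis
      using deg_diff_le le_less_trans max_less_iff_conj by blast
  qed
  finally have "\<delta> (j - 1) * y - x = 0 \<or> degree (\<delta> (j - 1) * y - x) < degree y"
    by (simp only: Y_def deg_emb_less_iff)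
  with \<open>degree y < degree x\<close> show ?thesis
    by auto
qed

lemma descent_forward:
  assumes lt: "deg (emb x) < deg (emb y)"
    and small: "deg (evalf (\<Phi> j) (emb x) (emb y)) < deg (a (j + 1))"
  shows "x \<noteq> 0" and "max (degree (\<delta> j * x - y)) (degree x) < max (degree x) (degree y)"
proof -
  define X Y where "X = emb x" and "Y = emb y"
  have "y \<noteq> 0"
    using lt by (auto simp: deg_emb)
  then have Y: "Y \<noteq> 0" "0 \<le> deg Y"
    by (simp_all add: Y_def deg_emb)
  have "deg X < deg (s j * Y)"
    using lt deg_mult_greater[OF deg_second_root[of j] Y(1)] by (simp add: X_def Y_def)
  then have far: "deg (X - s j * Y) = deg (s j) + deg Y"
    by (simp add: deg_diff_commute[of X] deg_diff_eq_left)
  define W where "W = Y - inverse (f j) * X"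
  have "X - f j * Y = - f j * W"
    using roots_nonzero(1)[of j] by (simp add: W_def field_simps)
  then have "deg (evalf (\<Phi> j) X Y) = deg (a j) + (deg (f j) + deg W) + (deg (s j) + deg Y)"
    by (simp add: evalf_chain far)
  also have "\<dots> = deg (a (j + 1)) + (deg W + deg Y)"
    using deg_coeff_succ[of j] by (simp add: ac_simps)
  finally have "deg (a (j + 1)) + (deg W + deg Y) < deg (a (j + 1))"
    using small by (simp add: X_def Y_def)
  then have W: "deg W < 0"
    using coeff_nonzero[of "j + 1"] Y(2)
    by (cases "deg (a (j + 1))"; cases "deg W"; cases "deg Y") auto
  show "x \<noteq> 0"
  proof
    assume "x = 0"
    then have "W = Y"
      by (simp add: W_def X_def)
    with W Y(2) show False
      by simp
  qed
  then have X: "X \<noteq> 0" "0 \<le> deg X"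
    by (simp_all add: X_def deg_emb)
  have "degree x < degree y"
    using lt X(1) by (simp add: X_def Y_def deg_emb_less_iff)
  have "emb (\<delta> j * x - y) = (emb (\<delta> j) - inverse (f j)) * X - W"
    by (simp add: X_def Y_def W_def left_diff_distrib)
  also have "deg \<dots> < deg X"
  proof -
    have "deg ((emb (\<delta> j) - inverse (f j)) * X) < deg X"
      using deg_delta_minus_inverse_first_root X(1) by (rule deg_mult_less)
    moreover have "deg W < deg X"
      using W X(2) by (rule less_le_trans)
    ultimately show ?thesis
      using deg_diff_le le_less_trans max_less_iff_conj by blast
  qed
  finally have "\<delta> j * x - y = 0 \<or> degree (\<delta> j * x - y) < degree x"
    by (simp only: X_def deg_emb_less_iff)
  with \<open>degree x < degree y\<close> show "max (degree (\<delta> j * x - y)) (degree x) < max (degree x) (degree y)"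
    by auto
qed

lemma exists_coeff_deg_le:
  assumes "(x, y) \<noteq> (0, 0)"
  shows "\<exists>k. deg (a k) \<le> deg (evalf (\<Phi> j) (emb x) (emb y))"
  using assms
proof (induction "max (degree x) (degree y)" arbitrary: j x y rule: less_induct)
  case less
  let ?v = "evalf (\<Phi> j) (emb x) (emb y)"
  show ?case
  proof (cases "deg (emb y) \<le> deg (emb x)")
    case True
    show ?thesis
    proof (cases "deg (a j) \<le> deg ?v")
      case False
      define w where "w = \<delta> (j - 1) * y - x"
      have "max (degree y) (degree w) < max (degree x) (degree y)"
        using descent_backward[OF less.prems True] False by (simp add: w_def not_le)
      moreover have "(y, w) \<noteq> (0, 0)"
        using less.prems by (auto simp: w_def)
      ultimately obtain k where "deg (a k) \<le> deg (evalf (\<Phi> (j - 1)) (emb y) (emb w))"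
        using less.hyps by blast
      moreover have "evalf (\<Phi> (j - 1)) (emb y) (emb w) = ?v"
        using evalf_chain_succ[of "j - 1" y w] by (simp add: w_def)
      ultimately show ?thesis
        by auto
    qed blast
  next
    case False
    show ?thesis
    proof (cases "deg (a (j + 1)) \<le> deg ?v")
      case small: False
      define w where "w = \<delta> j * x - y"
      have "max (degree w) (degree x) < max (degree x) (degree y)" and "x \<noteq> 0"
        using descent_forward[of x y j] False small by (simp_all add: w_def not_le)
      then obtain k where "deg (a k) \<le> deg (evalf (\<Phi> (j + 1)) (emb w) (emb x))"
        using less.hyps by blast
      then show ?thesis
        using evalf_chain_succ[of j x y] by (auto simp: w_def)
    qed blast
  qed
qed

lemma m_min_chain: "m_min (\<Phi> 0) = (INF k. deg (a k))"
proof (rule antisym)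
  show "m_min (\<Phi> 0) \<le> (INF k. deg (a k))"
    unfolding m_min_eq_Inf_form_values
  proof (rule INF_greatest)
    fix k
    have "a k \<in> form_values (\<Phi> 0)"
      using fst_in_form_values[of "\<Phi> k"] form_values_chain[of k] by simp
    then show "Inf (deg ` form_values (\<Phi> 0)) \<le> deg (a k)"
      by (rule Inf_lower[OF imageI])
  qed
  show "(INF k. deg (a k)) \<le> m_min (\<Phi> 0)"
    unfolding m_min_eq_Inf_form_values
  proof (rule Inf_greatest)
    fix u assume "u \<in> deg ` form_values (\<Phi> 0)"
    then obtain x y where "(x, y) \<noteq> (0, 0)" and "u = deg (evalf (\<Phi> 0) (emb x) (emb y))"
      by (auto simp: form_values_def)
    then obtain k where "deg (a k) \<le> u"
      using exists_coeff_deg_le by blast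
    then show "(INF k. deg (a k)) \<le> u"
      by (meson INF_lower2 UNIV_I)
  qed
qed

end

theorem theorem8:
  fixes A B :: "int \<Rightarrow> rat fls" and \<delta> :: "int \<Rightarrow> rat poly"
    and D sq :: "rat fls" and Q :: form
  assumes sq: "sq ^ 2 = D" and Dnz: "D \<noteq> 0"
    and forms: "\<And>i. is_bqf ((-1)^nat \<bar>i\<bar> * A i, B i, (-1)^nat \<bar>i+1\<bar> * A (i+1))"
    and disc: "\<And>i. disc ((-1)^nat \<bar>i\<bar> * A i, B i, (-1)^nat \<bar>i+1\<bar> * A (i+1)) = D"
    and red: "\<And>i. reduced sq ((-1)^nat \<bar>i\<bar> * A i, B i, (-1)^nat \<bar>i+1\<bar> * A (i+1))"
    and step: "\<And>i. transform ((-1)^nat \<bar>i\<bar> * A i, B i, (-1)^nat \<bar>i+1\<bar> * A (i+1)) 0 1 (-1) (\<delta> i)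
                  = ((-1)^nat \<bar>i+1\<bar> * A (i+1), B (i+1), (-1)^nat \<bar>i+2\<bar> * A (i+2))"
    and Qf: "is_bqf Q"
    and Qeq: "properly_equiv ((-1)^nat \<bar>0\<bar> * A 0, B 0, (-1)^nat \<bar>0+1\<bar> * A (0+1)) Q"
  shows "m_min Q = (INF i. deg (A i))"
proof -
  interpret reduced_chain sq "\<lambda>i. (- 1) ^ nat \<bar>i\<bar> * A i" B \<delta>
  proof
    fix j
    show "sq\<^sup>2 = disc ((- 1) ^ nat \<bar>j\<bar> * A j, B j, (- 1) ^ nat \<bar>j + 1\<bar> * A (j + 1))"
      using disc[of j] sq by simp
  qed (use red step in simp_all)
  have "m_min Q = m_min (\<Phi> 0)"
    using Qeq by (simp add: m_min_properly_equiv)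
  also have "\<dots> = (INF i. deg (A i))"
    using m_min_chain by simp
  finally show ?thesis .
qed

end
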